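(* Let $(M,\sigma^M,\rho^M)$ be a ground module for the quantum wreath product $B\wr\mathcal{H}(d)$ (notation as in the context), with structure map $\tau^M:K\Sigma_d\otimes M^{\otimes d}\to M^{\otimes d}\otimes\widetilde{\mathcal{H}}^\chi_d$. If $\sigma^M_i$ is invertible for every $1\le i\le d-1$, then $\tau^M$ is invertible.
   Context: Let $K$ be a commutative ring and $B$ a unital associative $K$-algebra, free over $K$. Fix $d\ge2$, $S,R\in B\otimes B$, $K$-linear $\sigma,\rho$ on $B\otimes B$; $Z_i$ and $\phi_i$ denote $Z$ resp. $\phi$ placed/acting at tensor positions $i,i+1$ of $B^{\otimes d}$. $B\wr\mathcal{H}(d)$ is generated by $B^{\otimes d}$ and $H_1,\dots,H_{d-1}$ with braid relations, $H_i^2=S_iH_i+R_i$, $H_ib=\sigma_i(b)H_i+\rho_i(b)$; $H_w$ is defined via reduced expressions; it is assumed to have a PBW basis $\{(b_{j_1}\otimes\cdots\otimes b_{j_d})H_w\}$ for a $K$-basis $\{b_j\}$ of $B$. For $\chi(S),\chi(R)\in K$, $\widetilde{\mathcal{H}}^\chi_d$ is generated by $h_1,\dots,h_{d-1}$ with type A braid relations and $h_i^2=\chi(S)h_i+\chi(R)$. $M$ is a left $B$-module on whose square $M\otimes M$ the elements $S,R$ act by $\chi(S),\chi(R)$; $\sigma^M,\rho^M\in\mathrm{End}_K(M\otimes M)$, with $\sigma^M_i,\rho^M_i$ their actions on factors $i,i+1$ of $M^{\otimes d}$. $K\Sigma_d$ is the free $K$-module on $\Sigma_d$. For a choice map $r$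 (a reduced expression $r(w)$ for each $w$, with $r(1)$ empty and $r(w)=s_ir(x)$, $x=s_iw<w$), $\tau^M$ is defined recursively by $\tau^M(1\otimes m)=m\otimes1$, $\tau^M(s_i\otimes m)=\sigma^M_i(m)\otimes h_i+\rho^M_i(m)\otimes1$, and $\tau^M(w\otimes m)=\sum_y(\sigma^M_i(m_y)\otimes h_ih_y+\rho^M_i(m_y)\otimes h_y)$ where $r(w)=s_ir(x)$ and $\tau^M(x\otimes m)=\sum_ym_y\otimes h_y$. Ground module means: $\tau^M$ independent of $r$, and for all $w,x,b,m$: if $H_wb=\sum_gb_gH_g$ then $\tau^M(w\otimes bm)=\sum_g(b_g\otimes1)\tau^M(g\otimes m)$; if $H_wH_x=\sum_gc_gH_g$ and $\tau^M(x\otimes m)=\sum_ym_y\otimes h_y$ then $\sum_g(c_g\otimes1)\tau^M(g\otimes m)=\sum_y\tau^M(w\otimes m_y)(1\otimes h_y)$. *)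

theory Defs
  imports Main HOL.Modules "HOL-Combinatorics.Transposition" "HOL-Combinatorics.Permutations"
begin

definition Sd :: "nat \<Rightarrow> (nat \<Rightarrow> nat) set" where
  "Sd d = {w. w permutes {1..d}}"

definition sgen :: "nat \<Rightarrow> nat \<Rightarrow> nat" where
  "sgen i = transpose i (Suc i)"

definition perm_len :: "nat \<Rightarrow> (nat \<Rightarrow> nat) \<Rightarrow> nat" where
  "perm_len d w = card {(a, b). 1 \<le> a \<and> a < b \<and> b \<le> d \<and> w b < w a}"

definition word_perm :: "nat list \<Rightarrow> nat \<Rightarrow> nat" where
  "word_perm is = foldr (\<lambda>i w. sgen i \<circ> w) is id"

definition reduced_expr :: "nat \<Rightarrow> nat list \<Rightarrow> (nat \<Rightarrow> nat) \<Rightarrow> bool" where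
  "reduced_expr d is w \<longleftrightarrow> set is \<subseteq> {1..d-1} \<and> word_perm is = w \<and> length is = perm_len d w"

definition choice_map :: "nat \<Rightarrow> ((nat \<Rightarrow> nat) \<Rightarrow> nat list) \<Rightarrow> bool" where
  "choice_map d r \<longleftrightarrow> r id = [] \<and>
     (\<forall>w\<in>Sd d. reduced_expr d (r w) w \<and>
        (w \<noteq> id \<longrightarrow> r w \<noteq> [] \<and> r (sgen (hd (r w)) \<circ> w) = tl (r w)))"

(* Coefficient of h_w in h_i h_y in the algebra H~^chi_d with standard basis {h_w}
   (h_i^2 = cS h_i + cR, cS = chi(S), cR = chi(R)). *)
definition hcoef :: "nat \<Rightarrow> 'k::comm_ring_1 \<Rightarrow> 'k \<Rightarrow> nat \<Rightarrow> (nat \<Rightarrow> nat) \<Rightarrow> (nat \<Rightarrow> nat) \<Rightarrow> 'k" where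
  "hcoef d cS cR i y w =
     (if perm_len d y < perm_len d (sgen i \<circ> y)
      then (if w = sgen i \<circ> y then 1 else 0)
      else (if w = y then cS else 0) + (if w = sgen i \<circ> y then cR else 0))"

(* Elements of M^{(x)d} (x) H~^chi_d are represented as F :: Sigma_d => V,
   F = sum_y F(y) (x) h_y (V = M^{(x)d}); F vanishes outside Sigma_d.
   Lstep i is the K-linear map  m (x) h  |->  sigma_i(m) (x) h_i h + rho_i(m) (x) h. *)
definition Lstep :: "nat \<Rightarrow> ('k::comm_ring_1 \<Rightarrow> 'v::ab_group_add \<Rightarrow> 'v) \<Rightarrow> 'k \<Rightarrow> 'k
    \<Rightarrow> (nat \<Rightarrow> 'v \<Rightarrow> 'v) \<Rightarrow> (nat \<Rightarrow> 'v \<Rightarrow> 'v) \<Rightarrow> nat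
    \<Rightarrow> ((nat \<Rightarrow> nat) \<Rightarrow> 'v) \<Rightarrow> ((nat \<Rightarrow> nat) \<Rightarrow> 'v)" where
  "Lstep d scale cS cR sig rho i F =
     (\<lambda>w. if w \<in> Sd d
          then (\<Sum>y\<in>Sd d. scale (hcoef d cS cR i y w) (sig i (F y))) + rho i (F w)
          else 0)"

(* tau^M(w (x) m) computed along the word r(w): m (x) 1 for the empty word,
   tau(s_i r(x)) = Lstep i (tau(r(x))). *)
definition tau_word :: "nat \<Rightarrow> ('k::comm_ring_1 \<Rightarrow> 'v::ab_group_add \<Rightarrow> 'v) \<Rightarrow> 'k \<Rightarrow> 'k
    \<Rightarrow> (nat \<Rightarrow> 'v \<Rightarrow> 'v) \<Rightarrow> (nat \<Rightarrow> 'v \<Rightarrow> 'v) \<Rightarrow> nat list \<Rightarrow> 'v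
    \<Rightarrow> ((nat \<Rightarrow> nat) \<Rightarrow> 'v)" where
  "tau_word d scale cS cR sig rho is m =
     foldr (Lstep d scale cS cR sig rho) is (\<lambda>w. if w = id then m else 0)"

(* Elements of K Sigma_d (x) M^{(x)d} are represented as f :: Sigma_d => V,
   f = sum_w w (x) f(w); tau^M is the K-linear extension. *)
definition tauM :: "nat \<Rightarrow> ('k::comm_ring_1 \<Rightarrow> 'v::ab_group_add \<Rightarrow> 'v) \<Rightarrow> 'k \<Rightarrow> 'k
    \<Rightarrow> (nat \<Rightarrow> 'v \<Rightarrow> 'v) \<Rightarrow> (nat \<Rightarrow> 'v \<Rightarrow> 'v) \<Rightarrow> ((nat \<Rightarrow> nat) \<Rightarrow> nat list)
    \<Rightarrow> ((nat \<Rightarrow> nat) \<Rightarrow> 'v) \<Rightarrow> ((nat \<Rightarrow> nat) \<Rightarrow> 'v)" where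
  "tauM d scale cS cR sig rho r f =
     (\<lambda>v. \<Sum>w\<in>Sd d. tau_word d scale cS cR sig rho (r w) (f w) v)"

definition fdom :: "nat \<Rightarrow> ((nat \<Rightarrow> nat) \<Rightarrow> 'v::zero) set" where
  "fdom d = {F. \<forall>w. w \<notin> Sd d \<longrightarrow> F w = 0}"

end

theory Submission
  imports Defs
begin

(* Order everything by the Coxeter length l.  As h_i h_y only involves h_y and h_(s_i y),
   tau^M(w (x) m) has components only at h_v with l(v) <= l(w), and its component of length
   l(w) is sigma_(i_1) ... sigma_(i_k)(m) (x) h_w, where r(w) = s_(i_1) ... s_(i_k).  Hence
   tau^M is triangular for the length filtration with diagonal entries the invertible maps
   sigma_(i_1) ... sigma_(i_k), and a triangular map with invertible diagonal is invertible. *)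

lemma sgen_permutes: "i \<in> {1..d-1} \<Longrightarrow> sgen i permutes {1..d}"
  unfolding sgen_def by (rule permutes_swap_id) auto

lemma sgen_sgen: "sgen i \<circ> (sgen i \<circ> x) = x"
  unfolding sgen_def by (simp add: comp_assoc[symmetric])

lemma id_in_Sd: "id \<in> Sd d"
  by (simp add: Sd_def)

lemma sgen_comp_in_Sd: "i \<in> {1..d-1} \<Longrightarrow> w \<in> Sd d \<Longrightarrow> sgen i \<circ> w \<in> Sd d"
  unfolding Sd_def using sgen_permutes permutes_compose by blast

lemma finite_Sd: "finite (Sd d)"
  unfolding Sd_def by (rule finite_permutations) simp

lemma word_perm_Nil: "word_perm [] = id"
  by (simp add: word_perm_def)

lemma word_perm_Cons: "word_perm (i # js) = sgen i \<circ> word_perm js"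
  by (simp add: word_perm_def)

lemma word_perm_in_Sd: "set is \<subseteq> {1..d-1} \<Longrightarrow> word_perm is \<in> Sd d"
  by (induction "is") (auto simp: word_perm_Nil word_perm_Cons id_in_Sd sgen_comp_in_Sd)

lemma perm_len_id: "perm_len d id = 0"
  unfolding perm_len_def by (auto simp: card_eq_0_iff)

lemma perm_len_sgen_le:
  assumes y: "y permutes {1..d}"
  shows "perm_len d (sgen i \<circ> y) \<le> perm_len d y + 1"
proof -
  let ?inv = "\<lambda>y. {(a, b). 1 \<le> a \<and> a < b \<and> b \<le> d \<and> y b < y a}"
  have fin: "finite (?inv y)"
    by (rule finite_subset[of _ "{1..d} \<times> {1..d}"]) auto
  \<comment> \<open>Composing with s_i can only create the inversion at the pair of positions holding i and i+1.\<close>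
  have "?inv (sgen i \<circ> y) \<subseteq> insert (inv y i, inv y (Suc i)) (?inv y)"
  proof
    fix p assume "p \<in> ?inv (sgen i \<circ> y)"
    then obtain a b where p: "p = (a, b)" "1 \<le> a" "a < b" "b \<le> d"
        and lt: "sgen i (y b) < sgen i (y a)" by auto
    have inj: "inj y" using y by (rule permutes_inj)
    show "p \<in> insert (inv y i, inv y (Suc i)) (?inv y)"
    proof (cases "y b < y a")
      case False
      moreover have "y a \<noteq> y b" using inj \<open>a < b\<close> by (metis injD less_irrefl)
      ultimately have "y a < y b" by simp
      with lt have "y a = i" "y b = Suc i"
        unfolding sgen_def transpose_def by (auto split: if_splits)
      then have "a = inv y i" "b = inv y (Suc i)" using inj by (metis inv_f_f)+
      with p(1) show ?thesis by simp
    qed (use p in auto)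
  qed
  then have "perm_len d (sgen i \<circ> y) \<le> card (insert (inv y i, inv y (Suc i)) (?inv y))"
    unfolding perm_len_def using fin by (intro card_mono) auto
  also have "\<dots> \<le> perm_len d y + 1"
    using fin by (simp add: perm_len_def card_insert_if)
  finally show ?thesis .
qed

lemma perm_len_word_le: "set is \<subseteq> {1..d-1} \<Longrightarrow> perm_len d (word_perm is) \<le> length is"
proof (induction "is")
  case Nil
  then show ?case by (simp only: word_perm_Nil perm_len_id)
next
  case (Cons i js)
  then have "word_perm js permutes {1..d}" using word_perm_in_Sd[of js d] by (simp add: Sd_def)
  then have "perm_len d (sgen i \<circ> word_perm js) \<le> perm_len d (word_perm js) + 1"
    by (rule perm_len_sgen_le)
  moreover have "perm_len d (word_perm js) \<le> length js" using Cons by simp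
  ultimately show ?case unfolding word_perm_Cons length_Cons by linarith
qed

lemma bij_foldr: "(\<And>i. i \<in> set is \<Longrightarrow> bij (f i)) \<Longrightarrow> bij (foldr f is)"
  by (induction "is") (auto simp: id_def[symmetric] intro: bij_comp)

definition supported :: "'a set \<Rightarrow> ('a \<Rightarrow> 'v::zero) set" where
  "supported S = {f. \<forall>w. w \<notin> S \<longrightarrow> f w = 0}"

lemma fdom_eq_supported: "fdom d = supported (Sd d)"
  by (simp add: fdom_def supported_def)

locale triangular_map =
  fixes S :: "'a set" and len :: "'a \<Rightarrow> nat" and D :: "'a \<Rightarrow> 'v::ab_group_add \<Rightarrow> 'v"
    and T :: "('a \<Rightarrow> 'v) \<Rightarrow> 'a \<Rightarrow> 'v"
  assumes finite: "finite S"
    and diff: "T (f - g) = T f - T g"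
    and closed: "f \<in> supported S \<Longrightarrow> T f \<in> supported S"
    and diagonal: "f \<in> supported S \<Longrightarrow> v \<in> S \<Longrightarrow> \<forall>u\<in>S. f u \<noteq> 0 \<longrightarrow> len u \<le> len v
                 \<Longrightarrow> T f v = D v (f v)"
    and D_bij: "v \<in> S \<Longrightarrow> bij (D v)"
begin

lemma T_zero: "T (\<lambda>_. 0) = (\<lambda>_. 0)"
  using diff[of "\<lambda>_. 0" "\<lambda>_. 0"] by (simp add: fun_diff_def)

lemma D_zero: "v \<in> S \<Longrightarrow> D v 0 = 0"
  using diagonal[of "\<lambda>_. 0" v] T_zero by (simp add: supported_def)

lemma len_less_Suc_Max: "v \<in> S \<Longrightarrow> len v < Suc (Max (len ` S))"
  using finite by (simp add: le_imp_less_Suc)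

lemma inj_on_supported: "inj_on T (supported S)"
proof (rule inj_onI)
  fix f g assume f: "f \<in> supported S" and g: "g \<in> supported S" and "T f = T g"
  then have T_diff_zero: "T (f - g) = (\<lambda>_. 0)" by (simp add: diff fun_eq_iff)
  have h: "f - g \<in> supported S" using f g by (simp add: supported_def)
  show "f = g"
  proof (rule ccontr)
    assume "f \<noteq> g"
    then obtain u where "u \<in> S \<and> (f - g) u \<noteq> 0" using h by (auto simp: supported_def fun_eq_iff)
    then obtain w where w: "w \<in> S \<and> (f - g) w \<noteq> 0"
        and top: "\<forall>u. u \<in> S \<and> (f - g) u \<noteq> 0 \<longrightarrow> len u \<le> len w"
      using ex_has_greatest_nat[of "\<lambda>u. u \<in> S \<and> (f - g) u \<noteq> 0" u len] len_less_Suc_Max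
      by blast
    have "D w ((f - g) w) = D w 0"
      using diagonal[OF h, of w] w top T_diff_zero D_zero by auto
    then show False using w D_bij[of w] by (simp add: bij_is_inj inj_eq)
  qed
qed

lemma image_if_len_less:
  assumes "G \<in> supported S" and "\<forall>v. G v \<noteq> 0 \<longrightarrow> len v < n"
  shows "G \<in> T ` supported S"
  using assms
proof (induction n arbitrary: G)
  case 0
  then have "G = T (\<lambda>_. 0)" by (auto simp: T_zero)
  then show ?case by (simp add: supported_def)
next
  case (Suc n)
  \<comment> \<open>Solve for the components of length n on the diagonal, then recurse on the rest.\<close>
  define f where "f w = (if w \<in> S \<and> len w = n then inv (D w) (G w) else 0)" for w
  have f: "f \<in> supported S" by (simp add: f_def supported_def)
  have rest: "G - T f \<in> supported S" using Suc.prems(1) closed[OF f] by (simp add: supported_def)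
  have "(G - T f) v = 0" if "n \<le> len v" for v
  proof (cases "v \<in> S")
    case True
    then have "T f v = D v (f v)" using diagonal[OF f] that by (auto simp: f_def)
    then show ?thesis
      using True that Suc.prems(2) D_bij[of v] D_zero
      by (cases "len v = n") (auto simp: f_def bij_is_surj surj_f_inv_f)
  qed (use rest in \<open>auto simp: supported_def\<close>)
  then have "\<forall>v. (G - T f) v \<noteq> 0 \<longrightarrow> len v < n" by (meson not_le)
  then obtain f' where f': "f' \<in> supported S" "G - T f = T f'" using Suc.IH[OF rest] by blast
  define g where "g x = f x + f' x" for x
  have "g - f = f'" by (simp add: g_def fun_eq_iff)
  then have "T f' = T g - T f" by (metis diff)
  then have "T g = G" using f'(2) by (simp add: fun_eq_iff)
  moreover have "g \<in> supported S" using f f'(1) by (simp add: supported_def g_def)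
  ultimately show ?case by blast
qed

lemma bij_betw_supported: "bij_betw T (supported S) (supported S)"
proof -
  have "supported S \<subseteq> T ` supported S"
  proof
    fix G :: "'a \<Rightarrow> 'v" assume G: "G \<in> supported S"
    then have "\<forall>v. G v \<noteq> 0 \<longrightarrow> len v < Suc (Max (len ` S))"
      using len_less_Suc_Max by (force simp: supported_def)
    with G show "G \<in> T ` supported S" by (rule image_if_len_less)
  qed
  with inj_on_supported closed show ?thesis by (auto simp: bij_betw_def)
qed

end

locale ground_data =
  fixes scale :: "'k::comm_ring_1 \<Rightarrow> 'v::ab_group_add \<Rightarrow> 'v"
    and d :: nat and cS cR :: 'k
    and sig rho :: "nat \<Rightarrow> 'v \<Rightarrow> 'v"
  assumes module: "module scale"
    and hom: "\<forall>i\<in>{1..d-1}. module_hom scale scale (sig i) \<and> module_hom scale scale (rho i)"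
begin

abbreviation "LS \<equiv> Lstep d scale cS cR sig rho"
abbreviation "TW \<equiv> tau_word d scale cS cR sig rho"
abbreviation "len \<equiv> perm_len d"

lemma sig_zero: "i \<in> {1..d-1} \<Longrightarrow> sig i 0 = 0"
  and rho_zero: "i \<in> {1..d-1} \<Longrightarrow> rho i 0 = 0"
  and sig_diff: "i \<in> {1..d-1} \<Longrightarrow> sig i (x - y) = sig i x - sig i y"
  and rho_diff: "i \<in> {1..d-1} \<Longrightarrow> rho i (x - y) = rho i x - rho i y"
  using hom module_hom.zero module_hom.diff by blast+

lemma tau_word_Nil: "TW [] m = (\<lambda>w. if w = id then m else 0)"
  by (simp add: tau_word_def)

lemma tau_word_Cons: "TW (i # js) m = LS i (TW js m)"
  by (simp add: tau_word_def)

lemma Lstep_diff: "i \<in> {1..d-1} \<Longrightarrow> LS i (F - G) = LS i F - LS i G"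
  by (simp add: Lstep_def fun_eq_iff sig_diff rho_diff sum_subtractf
      module.scale_right_diff_distrib[OF module])

lemma tau_word_diff: "set is \<subseteq> {1..d-1} \<Longrightarrow> TW is (a - b) = TW is a - TW is b"
proof (induction "is")
  case Nil
  show ?case by (simp add: tau_word_Nil fun_eq_iff)
next
  case (Cons i js)
  then have i: "i \<in> {1..d-1}" and js: "set js \<subseteq> {1..d-1}" by auto
  show ?case unfolding tau_word_Cons Cons.IH[OF js] by (rule Lstep_diff[OF i])
qed

lemma tau_word_zero: "set is \<subseteq> {1..d-1} \<Longrightarrow> TW is 0 v = 0"
  using tau_word_diff[of "is" 0 0] by (simp add: fun_eq_iff)

lemma Lstep_support:
  assumes i: "i \<in> {1..d-1}" and F: "\<And>y. F y \<noteq> 0 \<Longrightarrow> len y \<le> k"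
    and ne: "LS i F v \<noteq> 0"
  shows "v \<in> Sd d \<and> len v \<le> Suc k"
proof -
  have v: "v \<in> Sd d" using ne by (simp add: Lstep_def split: if_splits)
  with ne have "(\<Sum>y\<in>Sd d. scale (hcoef d cS cR i y v) (sig i (F y))) + rho i (F v) \<noteq> 0"
    by (simp add: Lstep_def)
  then consider "rho i (F v) \<noteq> 0" | "(\<Sum>y\<in>Sd d. scale (hcoef d cS cR i y v) (sig i (F y))) \<noteq> 0"
    by force
  then have "len v \<le> Suc k"
  proof cases
    case 1
    then show ?thesis using F rho_zero[OF i] le_SucI by metis
  next
    case 2
    then obtain y where y: "y \<in> Sd d" "scale (hcoef d cS cR i y v) (sig i (F y)) \<noteq> 0"
      by (meson sum.neutral)
    then have "F y \<noteq> 0" "hcoef d cS cR i y v \<noteq> 0"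
      using sig_zero[OF i] module.scale_zero_left[OF module] module.scale_zero_right[OF module]
      by auto
    moreover have "len (sgen i \<circ> y) \<le> len y + 1"
      using y(1) unfolding Sd_def by (intro perm_len_sgen_le) simp
    ultimately show ?thesis using F[of y] by (auto simp: hcoef_def split: if_splits)
  qed
  with v show ?thesis ..
qed

lemma tau_word_support:
  "set is \<subseteq> {1..d-1} \<Longrightarrow> TW is m v \<noteq> 0 \<Longrightarrow> v \<in> Sd d \<and> len v \<le> length is"
proof (induction "is" arbitrary: v)
  case Nil
  then show ?case by (auto simp: tau_word_Nil id_in_Sd perm_len_id split: if_splits)
next
  case (Cons i js)
  then have i: "i \<in> {1..d-1}" and js: "set js \<subseteq> {1..d-1}" by auto
  have "len y \<le> length js" if "TW js m y \<noteq> 0" for y using Cons.IH[OF js that] by blast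
  from Lstep_support[OF i this] Cons.prems(2) show ?case by (simp add: tau_word_Cons)
qed

lemma Lstep_top_length:
  assumes i: "i \<in> {1..d-1}" and F: "\<And>y. F y \<noteq> 0 \<Longrightarrow> len y \<le> k"
    and v: "len v = Suc k"
  shows "LS i F v = (if v \<in> Sd d then sig i (F (sgen i \<circ> v)) else 0)"
proof (cases "v \<in> Sd d")
  case True
  \<comment> \<open>At length k + 1 only the term h_i h_y with y = s_i v survives, with coefficient 1.\<close>
  let ?term = "\<lambda>y. scale (hcoef d cS cR i y v) (sig i (F y))"
  have term_at: "?term (sgen i \<circ> v) = sig i (F (sgen i \<circ> v))"
  proof (cases "F (sgen i \<circ> v) = 0")
    case False
    then have "len (sgen i \<circ> v) < len v" using F v by fastforce
    then show ?thesis by (simp add: hcoef_def sgen_sgen module.scale_one[OF module])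
  qed (simp add: sig_zero[OF i] module.scale_zero_right[OF module])
  have term_off: "?term y = 0" if "y \<noteq> sgen i \<circ> v" for y
  proof (cases "F y = 0")
    case False
    then have "v \<noteq> y" "v \<noteq> sgen i \<circ> y" using F[of y] v that by (auto simp: sgen_sgen)
    then show ?thesis by (simp add: hcoef_def module.scale_zero_left[OF module])
  qed (simp add: sig_zero[OF i] module.scale_zero_right[OF module])
  have "F v = 0" using F[of v] v by fastforce
  then have "LS i F v = (\<Sum>y\<in>Sd d. ?term y)" using True by (simp add: Lstep_def rho_zero[OF i])
  also have "\<dots> = ?term (sgen i \<circ> v)"
    using term_off sgen_comp_in_Sd[OF i True] finite_Sd by (simp add: sum.remove)
  finally show ?thesis using True term_at by simp
qed (simp add: Lstep_def)

lemma tau_word_top_length: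
  assumes "set is \<subseteq> {1..d-1}" and "len v = length is"
  shows "TW is m v = (if v = word_perm is then foldr sig is m else 0)"
  using assms
proof (induction "is" arbitrary: v)
  case Nil
  then show ?case by (simp add: tau_word_Nil word_perm_Nil id_def)
next
  case (Cons i js)
  then have i: "i \<in> {1..d-1}" and js: "set js \<subseteq> {1..d-1}" by auto
  have "len y \<le> length js" if "TW js m y \<noteq> 0" for y using tau_word_support[OF js that] by blast
  from Lstep_top_length[OF i this] Cons.prems(2)
  have top: "TW (i # js) m v = (if v \<in> Sd d then sig i (TW js m (sgen i \<circ> v)) else 0)"
    by (simp add: tau_word_Cons)
  have word_iff: "sgen i \<circ> v = word_perm js \<longleftrightarrow> v = word_perm (i # js)"
    using sgen_sgen[of i v] sgen_sgen[of i "word_perm js"] by (auto simp: word_perm_Cons)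
  show ?case
  proof (cases "v \<in> Sd d")
    case False
    then have "v \<noteq> word_perm (i # js)" using word_perm_in_Sd[OF Cons.prems(1)] by auto
    with False top show ?thesis by simp
  next
    case True
    then have "sgen i \<circ> v permutes {1..d}" using sgen_comp_in_Sd[OF i] by (simp add: Sd_def)
    then have "len v \<le> len (sgen i \<circ> v) + 1" using perm_len_sgen_le sgen_sgen by metis
    then consider "len (sgen i \<circ> v) = length js" | "len (sgen i \<circ> v) > length js"
      using Cons.prems(2) by fastforce
    then show ?thesis
    proof cases
      case 1
      have "TW js m (sgen i \<circ> v) = (if v = word_perm (i # js) then foldr sig js m else 0)"
        using Cons.IH[OF js 1] unfolding word_iff .
      with top True sig_zero[OF i] show ?thesis by simp
    next
      case 2
      then have "TW js m (sgen i \<circ> v) = 0" using tau_word_support[OF js] by fastforce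
      moreover have "v \<noteq> word_perm (i # js)"
        using 2 word_iff perm_len_word_le[OF js] by fastforce
      ultimately show ?thesis using top True sig_zero[OF i] by simp
    qed
  qed
qed

end

locale ground_data_choice = ground_data +
  fixes r :: "(nat \<Rightarrow> nat) \<Rightarrow> nat list"
  assumes choice_map: "choice_map d r"
begin

abbreviation "T \<equiv> tauM d scale cS cR sig rho r"

lemma choice_reduced:
  "u \<in> Sd d \<Longrightarrow> set (r u) \<subseteq> {1..d-1} \<and> word_perm (r u) = u \<and> length (r u) = len u"
  using choice_map by (simp add: choice_map_def reduced_expr_def)

lemma tau_word_choice:
  assumes u: "u \<in> Sd d" and "len u \<le> len v"
  shows "TW (r u) m v = (if v = u then foldr sig (r u) m else 0)"
proof (cases "len v = len u")
  case True
  then show ?thesis using tau_word_top_length[of "r u" v m] choice_reduced[OF u] by simp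
next
  case False
  with assms have "TW (r u) m v = 0"
    using tau_word_support[of "r u" m v] choice_reduced[OF u] by fastforce
  with False show ?thesis by auto
qed

lemma tauM_diff: "T (f - g) = T f - T g"
  unfolding tauM_def fun_eq_iff minus_apply sum_subtractf[symmetric]
  using choice_reduced tau_word_diff by (auto intro!: sum.cong)

lemma tauM_in_fdom: "T f \<in> fdom d"
  unfolding tauM_def fdom_def using choice_reduced tau_word_support
  by (fastforce intro!: sum.neutral)

lemma tauM_diagonal:
  assumes v: "v \<in> Sd d" and below: "\<forall>u\<in>Sd d. f u \<noteq> 0 \<longrightarrow> len u \<le> len v"
  shows "T f v = foldr sig (r v) (f v)"
proof -
  have "TW (r u) (f u) v = (if v = u then foldr sig (r v) (f v) else 0)" if u: "u \<in> Sd d" for u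
  proof (cases "len u \<le> len v")
    case False
    with below u have "f u = 0" by auto
    with False choice_reduced[OF u] show ?thesis by (auto simp: tau_word_zero)
  qed (use tau_word_choice[OF u] in auto)
  then show ?thesis unfolding tauM_def using v finite_Sd by simp
qed

end

theorem lemma5p2:
  fixes scale :: "'k::comm_ring_1 \<Rightarrow> 'v::ab_group_add \<Rightarrow> 'v"
    and d :: nat and cS cR :: 'k
    and sig rho :: "nat \<Rightarrow> 'v \<Rightarrow> 'v"
    and r :: "(nat \<Rightarrow> nat) \<Rightarrow> nat list"
  assumes "module scale"
    and "d \<ge> 2"
    and "\<forall>i\<in>{1..d-1}. module_hom scale scale (sig i) \<and> module_hom scale scale (rho i)"
    and "choice_map d r"
    and "\<forall>r'. choice_map d r' \<longrightarrow> tauM d scale cS cR sig rho r' = tauM d scale cS cR sig rho r"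
    and "\<forall>i\<in>{1..d-1}. bij (sig i)"
  shows "bij_betw (tauM d scale cS cR sig rho r) (fdom d) (fdom d)"
proof -
  interpret ground_data_choice scale d cS cR sig rho r
    using assms(1,3,4)
    by (simp add: ground_data_choice_def ground_data_def ground_data_choice_axioms_def)
  have "bij (foldr sig (r v))" if "v \<in> Sd d" for v
    using assms(6) choice_reduced[OF that] by (intro bij_foldr) auto
  then interpret triangular_map "Sd d" len "\<lambda>v. foldr sig (r v)" T
    using finite_Sd tauM_diff tauM_in_fdom tauM_diagonal
    by unfold_locales (auto simp: fdom_eq_supported)
  show ?thesis using bij_betw_supported by (simp add: fdom_eq_supported)
qed

end
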